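(* Let $n,p\ge1$ be integers and let $\mathbf{A}^{p+1}_{n+1}$ be as defined in the context. The implicative filters of $\mathbf{A}^{p+1}_{n+1}$ different from $A$ are exactly the three sets $\{\top\}$, $f_\omega=\{\langle(n,r),p\rangle: r\le0\}$, and ${\uparrow}\langle(0,0),p\rangle=\{a\in A: a\ge\langle(0,0),p\rangle\}$ (and $\{\top\}\subsetneq f_\omega\subsetneq{\uparrow}\langle(0,0),p\rangle$).
   Context: Order $\mathbb{Z}\times\mathbb{Z}$ lexicographically: $(m,r)\preccurlyeq(k,s)$ iff $m<k$, or $m=k$ and $r\le s$; addition/subtraction of pairs is componentwise, and $\min,\max$ of pairs refer to $\preccurlyeq$. For an integer $n\ge1$ let $L^\omega_{n+1}=\{(m,r)\in\mathbb{Z}^2:(0,0)\preccurlyeq(m,r)\preccurlyeq(n,0)\}$ with $x\ast y=\max\{(0,0),x+y-(n,0)\}$ and $x\to y=\min\{(n,0),(n,0)-x+y\}$. For an integer $p\ge1$ let $L_{p+1}=\{0,1,\dots,p\}$ with $\alpha\ast\beta=\max\{0,\alpha+\beta-p\}$. Define $$A=A^{p+1}_{n+1}=\{\langle(m,r),\alpha\rangle:(m,r)\in L^\omega_{n+1},\ \alpha\in\{0,p\}\}\cup\{\langle(m,r),\alpha\rangle:(0,0)\preccurlyeq(m,r)\preccurlyeq(n-1,0),\ 0<\alpha<p\}.$$ Order: $\langle(m,r),\alpha\rangle\le\langle(k,s),\beta\rangle$ iff one of: (o1) $\alpha\neq0$, $\alpha\le\beta$ and $(m,r)\preccurlyeq(k,s)$;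 (o2) $\alpha=\beta=0$ and $(k,s)\preccurlyeq(m,r)$; (o3) $\alpha=0$, $\beta\ne0$ and $(n-1,0)\preccurlyeq(m+k,r+s)$. $\wedge,\vee$ denote meet and join for $\le$. Put $\bot=\langle(n,0),0\rangle$, $\top=\langle(n,0),p\rangle$. For $a=\langle(m,r),\alpha\rangle$, $b=\langle(k,s),\beta\rangle\in A$ define $a\odot b$ by: (P1) if $\alpha,\beta\ge1$ and $\alpha+\beta>p$: $a\odot b=\langle(m,r)\ast(k,s),\alpha+\beta-p\rangle$; (P2) if $\alpha,\beta\ge1$ and $\alpha+\beta\le p$: $a\odot b=\langle\min\{(n,0),(2n-(m+k+1),-(r+s))\},0\rangle$; (P3) if $\alpha\ge1$, $\beta=0$: $a\odot b=\langle(m,r)\to(k,s),0\rangle$, and if $\alpha=0$, $\beta\ge1$: $a\odot b=\langle(k,s)\to(m,r),0\rangle$; (P4) if $\alpha=\beta=0$: $a\odot b=\langle\min\{(n,0),(m+k+1,r+s)\},0\rangle$. Define $\sim\langle(m,r),\alpha\rangle=\langle(m,r),p-\alpha\rangle$ if $\alpha\in\{0,p\}$, and $\sim\langle(m,r),\alpha\rangle=\langle(n-1-m,-r),p-\alpha\rangle$ if $0<\alpha<p$. Define $a\Rightarrow b=\sim(a\odot\sim b)$. The algebra $\mathbf{A}^{p+1}_{n+1}$ is $\langle A;\odot,\Rightarrow,\wedge,\vee,\bot,\top\rangle$. An implicative filter of $\mathbf{A}^{p+1}_{n+1}$ is a subset $F\subseteq A$ with $\top\in F$, closed under $\odot$,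 and upward closed w.r.t. $\le$. *)

theory Defs
  imports Main
begin

type_synonym zz = "int \<times> int"

definition lle :: "zz \<Rightarrow> zz \<Rightarrow> bool" where
  "lle x y \<longleftrightarrow> fst x < fst y \<or> (fst x = fst y \<and> snd x \<le> snd y)"

definition lmin :: "zz \<Rightarrow> zz \<Rightarrow> zz" where
  "lmin x y = (if lle x y then x else y)"

definition lmax :: "zz \<Rightarrow> zz \<Rightarrow> zz" where
  "lmax x y = (if lle x y then y else x)"

definition zadd :: "zz \<Rightarrow> zz \<Rightarrow> zz" where
  "zadd x y = (fst x + fst y, snd x + snd y)"

definition zsub :: "zz \<Rightarrow> zz \<Rightarrow> zz" where
  "zsub x y = (fst x - fst y, snd x - snd y)"

definition Lw :: "int \<Rightarrow> zz set" where
  "Lw n = {x. lle (0,0) x \<and> lle x (n,0)}"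

definition Lstar :: "int \<Rightarrow> zz \<Rightarrow> zz \<Rightarrow> zz" where
  "Lstar n x y = lmax (0,0) (zsub (zadd x y) (n,0))"

definition Limp :: "int \<Rightarrow> zz \<Rightarrow> zz \<Rightarrow> zz" where
  "Limp n x y = lmin (n,0) (zadd (zsub (n,0) x) y)"

text \<open>Elements \<open>\<langle>(m,r),\<alpha>\<rangle>\<close> are represented as \<open>((m,r),\<alpha>)\<close>.\<close>
type_synonym elt = "zz \<times> int"

definition Acar :: "int \<Rightarrow> int \<Rightarrow> elt set" where
  "Acar n p = {(x,\<alpha>). x \<in> Lw n \<and> (\<alpha> = 0 \<or> \<alpha> = p)}
            \<union> {(x,\<alpha>). lle (0,0) x \<and> lle x (n-1,0) \<and> 0 < \<alpha> \<and> \<alpha> < p}"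

definition Ale :: "int \<Rightarrow> int \<Rightarrow> elt \<Rightarrow> elt \<Rightarrow> bool" where
  "Ale n p a b \<longleftrightarrow>
     (let x = fst a; \<alpha> = snd a; y = fst b; \<beta> = snd b in
       (\<alpha> \<noteq> 0 \<and> \<alpha> \<le> \<beta> \<and> lle x y)
     \<or> (\<alpha> = 0 \<and> \<beta> = 0 \<and> lle y x)
     \<or> (\<alpha> = 0 \<and> \<beta> \<noteq> 0 \<and> lle (n-1,0) (zadd x y)))"

definition Atop :: "int \<Rightarrow> int \<Rightarrow> elt" where
  "Atop n p = ((n,0), p)"

definition Abot :: "int \<Rightarrow> int \<Rightarrow> elt" where
  "Abot n p = ((n,0), 0)"

definition Aprod :: "int \<Rightarrow> int \<Rightarrow> elt \<Rightarrow> elt \<Rightarrow> elt" where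
  "Aprod n p a b =
     (let x = fst a; \<alpha> = snd a; y = fst b; \<beta> = snd b in
      if 1 \<le> \<alpha> \<and> 1 \<le> \<beta> \<and> \<alpha> + \<beta> > p then (Lstar n x y, \<alpha> + \<beta> - p)
      else if 1 \<le> \<alpha> \<and> 1 \<le> \<beta> then
        (lmin (n,0) (2*n - (fst x + fst y + 1), - (snd x + snd y)), 0)
      else if 1 \<le> \<alpha> \<and> \<beta> = 0 then (Limp n x y, 0)
      else if \<alpha> = 0 \<and> 1 \<le> \<beta> then (Limp n y x, 0)
      else (lmin (n,0) (fst x + fst y + 1, snd x + snd y), 0))"

definition impl_filter :: "int \<Rightarrow> int \<Rightarrow> elt set \<Rightarrow> bool" where
  "impl_filter n p F \<longleftrightarrow>
     F \<subseteq> Acar n p \<and> Atop n p \<in> F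
     \<and> (\<forall>a\<in>F. \<forall>b\<in>F. Aprod n p a b \<in> F)
     \<and> (\<forall>a\<in>F. \<forall>b\<in>Acar n p. Ale n p a b \<longrightarrow> b \<in> F)"

definition f_omega :: "int \<Rightarrow> int \<Rightarrow> elt set" where
  "f_omega n p = {((n,r),p) | r. r \<le> 0}"

definition up00 :: "int \<Rightarrow> int \<Rightarrow> elt set" where
  "up00 n p = {a \<in> Acar n p. Ale n p ((0,0),p) a}"

end

theory Submission
  imports Defs
begin

text \<open>Squaring drives every element of a proper filter to level \<open>p\<close>: at a level
  \<open>0 < \<alpha> < p\<close> it lowers the level until it becomes \<open>0\<close>, and at level \<open>0\<close> it raises the first
  coordinate until it reaches \<open>\<bottom> = \<langle>(n,0),0\<rangle>\<close>, which lies below everything. On level \<open>p\<close> the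
  product \<open>\<odot>\<close> is the product \<open>\<ast>\<close> of \<open>L^\<omega>_{n+1}\<close>, and squaring \<open>(m,r)\<close> with \<open>m < n\<close> lowers \<open>m\<close>
  until it reaches \<open>(0,0)\<close>. A proper filter avoiding such elements consists of pairs \<open>(n,r)\<close>
  with \<open>r \<le> 0\<close>, and already one of them with \<open>r < 0\<close> generates all of \<open>f\<^sub>\<omega>\<close>.\<close>

lemma mem_Acar_iff: "((m,r),a) \<in> Acar n p \<longleftrightarrow>
   (0 < m \<or> (m = 0 \<and> 0 \<le> r)) \<and> (m < n \<or> (m = n \<and> r \<le> 0)) \<and>
   (a = 0 \<or> a = p \<or> (0 < a \<and> a < p \<and> (m < n - 1 \<or> (m = n - 1 \<and> r \<le> 0))))"
  unfolding Acar_def Lw_def lle_def by auto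

lemma Abot_in_Acar: "n \<ge> 1 \<Longrightarrow> Abot n p \<in> Acar n p"
  by (simp add: Abot_def mem_Acar_iff)

lemma up00_eq: "p \<ge> 1 \<Longrightarrow> up00 n p = {a \<in> Acar n p. snd a = p}"
  unfolding up00_def Ale_def by (auto simp: Let_def mem_Acar_iff lle_def)

lemma Aprod_p_p: "p \<ge> 1 \<Longrightarrow> Aprod n p (x,p) (y,p) = (Lstar n x y, p)"
  unfolding Aprod_def by (simp add: Let_def)

lemma Aprod_0_0: "Aprod n p (x,0) (y,0) = (lmin (n,0) (fst x + fst y + 1, snd x + snd y), 0)"
  unfolding Aprod_def by (simp add: Let_def)

lemma Aprod_pos_pos: "1 \<le> a \<Longrightarrow> 1 \<le> b \<Longrightarrow> Aprod n p (x,a) (y,b) =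
   (if a + b > p then (Lstar n x y, a + b - p)
    else (lmin (n,0) (2*n - (fst x + fst y + 1), - (snd x + snd y)), 0))"
  unfolding Aprod_def by (simp add: Let_def)

lemma impl_filter_subset: "impl_filter n p F \<Longrightarrow> F \<subseteq> Acar n p"
  unfolding impl_filter_def by blast

lemma impl_filter_Atop: "impl_filter n p F \<Longrightarrow> Atop n p \<in> F"
  unfolding impl_filter_def by blast

lemma impl_filter_Aprod: "impl_filter n p F \<Longrightarrow> a \<in> F \<Longrightarrow> b \<in> F \<Longrightarrow> Aprod n p a b \<in> F"
  unfolding impl_filter_def by blast

lemma impl_filter_upward:
  "impl_filter n p F \<Longrightarrow> a \<in> F \<Longrightarrow> b \<in> Acar n p \<Longrightarrow> Ale n p a b \<Longrightarrow> b \<in> F"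
  unfolding impl_filter_def by blast

lemma impl_filter_Abot_eq_Acar:
  assumes "n \<ge> 1" "p \<ge> 1" "impl_filter n p F" "Abot n p \<in> F"
  shows "F = Acar n p"
proof
  show "F \<subseteq> Acar n p" using assms(3) by (rule impl_filter_subset)
  show "Acar n p \<subseteq> F"
  proof
    fix b assume b: "b \<in> Acar n p"
    obtain m r a where [simp]: "b = ((m,r),a)" by (metis prod.collapse)
    have "Ale n p (Abot n p) b" using b assms(1,2)
      by (auto simp: Ale_def Abot_def mem_Acar_iff lle_def zadd_def Let_def)
    then show "b \<in> F" using impl_filter_upward[OF assms(3,4) b] by blast
  qed
qed

lemma impl_filter_level_0_imp_Abot:
  assumes "impl_filter n p F" "((m,r),0) \<in> F"
  shows "Abot n p \<in> F"
  using assms(2)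
proof (induction "nat (n - m)" arbitrary: m r rule: less_induct)
  case less
  have "m \<ge> 0"
    using subsetD[OF impl_filter_subset[OF assms(1)] less.prems] by (auto simp: mem_Acar_iff)
  have sq: "(lmin (n,0) (2*m + 1, 2*r), 0) \<in> F"
    using impl_filter_Aprod[OF assms(1) less.prems less.prems] by (simp add: Aprod_0_0)
  show ?case
  proof (cases "lle (n,0) (2*m + 1, 2*r)")
    case True
    then show ?thesis using sq by (simp add: lmin_def Abot_def)
  next
    case False
    then have "((2*m + 1, 2*r), 0) \<in> F" using sq by (simp add: lmin_def)
    moreover have "2*m + 1 \<le> n"
      using subsetD[OF impl_filter_subset[OF assms(1)] calculation] by (auto simp: mem_Acar_iff)
    ultimately show ?thesis using less.hyps \<open>m \<ge> 0\<close> by force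
  qed
qed

lemma impl_filter_mid_level_imp_level_0:
  assumes "impl_filter n p F" "((m,r),a) \<in> F" "0 < a" "a < p"
  shows "\<exists>x. (x,0) \<in> F"
  using assms(2-4)
proof (induction "nat a" arbitrary: m r a rule: less_induct)
  case less
  have sq: "Aprod n p ((m,r),a) ((m,r),a) \<in> F"
    using impl_filter_Aprod[OF assms(1) less.prems(1) less.prems(1)] .
  show ?case
  proof (cases "2*a > p")
    case True
    then have "((Lstar n (m,r) (m,r)), 2*a - p) \<in> F"
      using sq less.prems by (simp add: Aprod_pos_pos)
    moreover have "nat (2*a - p) < nat a" "0 < 2*a - p" "2*a - p < p"
      using True less.prems by auto
    ultimately show ?thesis using less.hyps[of "2*a - p"] by (metis prod.collapse)
  next
    case False
    then have "(lmin (n,0) (2*n - (2*m + 1), - (2*r)), 0) \<in> F"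
      using sq less.prems by (simp add: Aprod_pos_pos)
    then show ?thesis by blast
  qed
qed

lemma proper_impl_filter_level_p:
  assumes "n \<ge> 1" "p \<ge> 1" "impl_filter n p F" "F \<noteq> Acar n p" "x \<in> F"
  shows "snd x = p"
proof -
  obtain m r a where x: "x = ((m,r),a)" by (metis prod.collapse)
  have no_level_0: "(y,0) \<notin> F" for y
    using impl_filter_level_0_imp_Abot[OF assms(3), of "fst y" "snd y"]
      impl_filter_Abot_eq_Acar[OF assms(1-3)] assms(4) by auto
  have "a = 0 \<or> a = p \<or> (0 < a \<and> a < p)"
    using impl_filter_subset[OF assms(3)] assms(5) x by (auto simp: mem_Acar_iff)
  then show ?thesis
    using no_level_0 impl_filter_mid_level_imp_level_0[OF assms(3)] assms(5) x by auto
qed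

lemma impl_filter_origin_level_p:
  assumes "impl_filter n p F" "p \<ge> 1" "((m,r),p) \<in> F" "m < n"
  shows "((0,0),p) \<in> F"
  using assms(3,4)
proof (induction "nat m" arbitrary: m r rule: less_induct)
  case less
  have sq: "(lmax (0,0) (2*m - n, 2*r), p) \<in> F"
    using impl_filter_Aprod[OF assms(1) less.prems(1) less.prems(1)] assms(2)
    by (simp add: Aprod_p_p Lstar_def zadd_def zsub_def)
  show ?case
  proof (cases "lle (0,0) (2*m - n, 2*r)")
    case True
    then have "((2*m - n, 2*r), p) \<in> F" using sq by (simp add: lmax_def)
    moreover have "nat (2*m - n) < nat m" "2*m - n < n"
      using True less.prems(2) by (auto simp: lle_def)
    ultimately show ?thesis using less.hyps by blast
  next
    case False
    then show ?thesis using sq by (simp add: lmax_def)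
  qed
qed

lemma impl_filter_f_omega_subset:
  assumes "n \<ge> 1" "p \<ge> 1" "impl_filter n p F" "((n,r),p) \<in> F" "r < 0"
  shows "f_omega n p \<subseteq> F"
proof
  have "((n,s),p) \<in> F" if "s \<le> 0" for s
    using that
  proof (induction "nat (- s)" arbitrary: s rule: less_induct)
    case less
    show ?case
    proof (cases "r \<le> s")
      case True
      have "((n,s),p) \<in> Acar n p" "Ale n p ((n,r),p) ((n,s),p)"
        using True less.prems assms(1,2) by (auto simp: mem_Acar_iff Ale_def lle_def)
      then show ?thesis using impl_filter_upward[OF assms(3,4)] by blast
    next
      case False
      \<comment> \<open>\<open>(n,r) \<ast> (n,s-r) = (n,s)\<close>, and \<open>s - r\<close> is closer to \<open>0\<close> than \<open>s\<close>.\<close>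
      then have "((n, s - r), p) \<in> F" using less.hyps assms(5) by simp
      from impl_filter_Aprod[OF assms(3,4) this] show ?thesis
        using assms(1,2) by (simp add: Aprod_p_p Lstar_def lmax_def zadd_def zsub_def lle_def)
    qed
  qed
  then show "b \<in> F" if "b \<in> f_omega n p" for b
    using that unfolding f_omega_def by blast
qed

lemma proper_impl_filter_cases:
  assumes "n \<ge> 1" "p \<ge> 1" "impl_filter n p F" "F \<noteq> Acar n p"
  shows "F = {Atop n p} \<or> F = f_omega n p \<or> F = up00 n p"
proof -
  have level_p: "\<And>x. x \<in> F \<Longrightarrow> snd x = p"
    using proper_impl_filter_level_p[OF assms] .
  show ?thesis
  proof (cases "\<exists>m r. ((m,r),p) \<in> F \<and> m < n")
    case True
    then have "((0,0),p) \<in> F" using impl_filter_origin_level_p[OF assms(3,2)] by blast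
    then have "up00 n p \<subseteq> F" unfolding up00_def using impl_filter_upward[OF assms(3)] by blast
    moreover have "F \<subseteq> up00 n p"
      using level_p impl_filter_subset[OF assms(3)] up00_eq[OF assms(2)] by blast
    ultimately show ?thesis by blast
  next
    case False
    have F_f_omega: "F \<subseteq> f_omega n p"
    proof
      fix x assume x: "x \<in> F"
      obtain m r a where [simp]: "x = ((m,r),a)" by (metis prod.collapse)
      show "x \<in> f_omega n p"
        using x False level_p[OF x] impl_filter_subset[OF assms(3)]
        by (force simp: mem_Acar_iff f_omega_def)
    qed
    show ?thesis
    proof (cases "\<exists>r. ((n,r),p) \<in> F \<and> r < 0")
      case True
      then show ?thesis
        using impl_filter_f_omega_subset[OF assms(1-3)] F_f_omega by blast
    next
      case False
      then have "F \<subseteq> {Atop n p}" using F_f_omega by (force simp: f_omega_def Atop_def)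
      then show ?thesis using impl_filter_Atop[OF assms(3)] by blast
    qed
  qed
qed

lemma impl_filter_Atop_singleton: "n \<ge> 1 \<Longrightarrow> p \<ge> 1 \<Longrightarrow> impl_filter n p {Atop n p}"
  unfolding impl_filter_def
  by (auto simp: Atop_def mem_Acar_iff Aprod_p_p Lstar_def lmax_def zadd_def zsub_def lle_def Ale_def)

lemma impl_filter_f_omega: "n \<ge> 1 \<Longrightarrow> p \<ge> 1 \<Longrightarrow> impl_filter n p (f_omega n p)"
  unfolding impl_filter_def f_omega_def
  by (auto simp: Atop_def mem_Acar_iff Aprod_p_p Lstar_def lmax_def zadd_def zsub_def lle_def Ale_def)

lemma impl_filter_up00: "n \<ge> 1 \<Longrightarrow> p \<ge> 1 \<Longrightarrow> impl_filter n p (up00 n p)"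
  unfolding impl_filter_def up00_eq
  by (auto simp: Atop_def mem_Acar_iff Aprod_p_p Lstar_def lmax_def zadd_def zsub_def lle_def Ale_def)

lemma Atop_psubset_f_omega: "{Atop n p} \<subset> f_omega n p"
proof -
  have "Atop n p \<in> f_omega n p" "((n,-1),p) \<in> f_omega n p - {Atop n p}"
    by (auto simp: Atop_def f_omega_def)
  then show ?thesis by blast
qed

lemma f_omega_psubset_up00: "n \<ge> 1 \<Longrightarrow> p \<ge> 1 \<Longrightarrow> f_omega n p \<subset> up00 n p"
proof -
  assume "n \<ge> 1" "p \<ge> 1"
  then have "((0,0),p) \<in> up00 n p - f_omega n p" "f_omega n p \<subseteq> up00 n p"
    by (auto simp: f_omega_def up00_eq mem_Acar_iff)
  then show ?thesis by blast
qed

theorem lemma3p2: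
  fixes n p :: int
  assumes "n \<ge> 1" and "p \<ge> 1"
  shows "(\<forall>F. (impl_filter n p F \<and> F \<noteq> Acar n p) \<longleftrightarrow>
              (F = {Atop n p} \<or> F = f_omega n p \<or> F = up00 n p))
         \<and> {Atop n p} \<subset> f_omega n p \<and> f_omega n p \<subset> up00 n p"
proof -
  have "impl_filter n p F \<and> F \<noteq> Acar n p \<longleftrightarrow>
        F = {Atop n p} \<or> F = f_omega n p \<or> F = up00 n p" for F
  proof
    assume "impl_filter n p F \<and> F \<noteq> Acar n p"
    then show "F = {Atop n p} \<or> F = f_omega n p \<or> F = up00 n p"
      using proper_impl_filter_cases[OF assms] by blast
  next
    assume F: "F = {Atop n p} \<or> F = f_omega n p \<or> F = up00 n p"
    have "Abot n p \<notin> F"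
      using F assms(2) by (auto simp: Abot_def Atop_def f_omega_def up00_eq)
    then show "impl_filter n p F \<and> F \<noteq> Acar n p"
      using F Abot_in_Acar[OF assms(1)] impl_filter_Atop_singleton[OF assms]
        impl_filter_f_omega[OF assms] impl_filter_up00[OF assms] by blast
  qed
  then show ?thesis
    using Atop_psubset_f_omega f_omega_psubset_up00[OF assms] by simp
qed

end
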